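(* Let $L$ be a Lie algebra over a field, $I$ an ideal of $L$, $s\in L$, and $k\ge2$ such that $[Is^k]=(0)$. Then for every integer $t\ge2$ and all elements $a_1,\dots,a_N\in I$, where $N=kt-1$, the operator $\operatorname{ad}([a_1s^{k-1}])\cdots\operatorname{ad}([a_Ns^{k-1}])$ on $L$ is a linear combination of operators of the form \[P'\,\operatorname{ad}(s)^{k-1}\prod_{j=0}^{t-2}\big(\operatorname{ad}(a_{i+j})\operatorname{ad}(s)^{k-1}\big)\,P'',\] where $i$ is an index with $1\le i$ and $i+t-2\le N$, and $P',P''$ are (possibly empty) products of the operators $\operatorname{ad}(a_1),\dots,\operatorname{ad}(a_N),\operatorname{ad}(s)$.
   Context: $[a,b,c,\dots]$ denotes the left-normed commutator $[\cdots[[a,b],c],\dots]$, and $[ab^k]=[a,b,\dots,b]$ with $b$ repeated $k$ times; $[Is^k]$ denotes the set $\{[as^k]:a\in I\}$. $\operatorname{ad}(a)$ is the operator $x\mapsto[x,a]$; operators act on the right, so a product $uv$ of operators means first $u$ then $v$. *)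

theory Defs
  imports Main "HOL.Vector_Spaces"
begin

definition lie_algebra :: "('k::field \<Rightarrow> 'a::ab_group_add \<Rightarrow> 'a) \<Rightarrow> ('a \<Rightarrow> 'a \<Rightarrow> 'a) \<Rightarrow> bool" where
  "lie_algebra scale br \<longleftrightarrow>
     vector_space scale \<and>
     (\<forall>x y z. br (x + y) z = br x z + br y z) \<and>
     (\<forall>x y z. br x (y + z) = br x y + br x z) \<and>
     (\<forall>c x y. br (scale c x) y = scale c (br x y)) \<and>
     (\<forall>c x y. br x (scale c y) = scale c (br x y)) \<and>
     (\<forall>x. br x x = 0) \<and>
     (\<forall>x y z. br (br x y) z + br (br y z) x + br (br z x) y = 0)"

definition lie_ideal :: "('k::field \<Rightarrow> 'a::ab_group_add \<Rightarrow> 'a) \<Rightarrow> ('a \<Rightarrow> 'a \<Rightarrow> 'a) \<Rightarrow> 'a set \<Rightarrow> bool" where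
  "lie_ideal scale br I \<longleftrightarrow>
     0 \<in> I \<and> (\<forall>x\<in>I. \<forall>y\<in>I. x + y \<in> I) \<and> (\<forall>c. \<forall>x\<in>I. scale c x \<in> I) \<and>
     (\<forall>x\<in>I. \<forall>y. br x y \<in> I \<and> br y x \<in> I)"

definition ad :: "('a \<Rightarrow> 'a \<Rightarrow> 'a) \<Rightarrow> 'a \<Rightarrow> 'a \<Rightarrow> 'a" where
  "ad br a = (\<lambda>x. br x a)"

text \<open>Left-normed commutator [a b^k] = a ad(b)^k.\<close>
definition lcomm_pow :: "('a \<Rightarrow> 'a \<Rightarrow> 'a) \<Rightarrow> 'a \<Rightarrow> 'a \<Rightarrow> nat \<Rightarrow> 'a" where
  "lcomm_pow br a b k = (ad br b ^^ k) a"

text \<open>Product of operators u1 u2 ... un acting on the right: first u1, then u2, ...\<close>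
definition opprod :: "('a \<Rightarrow> 'a) list \<Rightarrow> 'a \<Rightarrow> 'a" where
  "opprod us = fold (\<lambda>u acc. u \<circ> acc) us id"

definition lin_comb_of :: "('k::field \<Rightarrow> 'a::ab_group_add \<Rightarrow> 'a) \<Rightarrow> ('a \<Rightarrow> 'a) set \<Rightarrow> ('a \<Rightarrow> 'a) \<Rightarrow> bool" where
  "lin_comb_of scale S T \<longleftrightarrow>
     (\<exists>F c. finite F \<and> F \<subseteq> S \<and> T = (\<lambda>x. \<Sum>f\<in>F. scale (c f) (f x)))"

end

theory Submission
  imports Defs
begin

text \<open>Since ad([x,s]) = ad(x) ad(s) - ad(s) ad(x), each factor ad([a_l s^(k-1)]) is a linear
  combination of the words ad(s)^\<mu> ad(a_l) ad(s)^(k-1-\<mu>), 0 \<le> \<mu> \<le> k-1, so the product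
  is a linear combination of words given by a choice \<mu>_1, ..., \<mu>_N. If \<mu>_l < \<mu>_(l+1) for
  some l, then ad(a_l) is followed by at least k factors ad(s); as I is an ideal and [I s^k] = 0,
  such a word vanishes. Otherwise \<mu> is non-increasing; extended by \<mu>_0 = k-1 and
  \<mu>_(kt) = 0, it cannot strictly drop on each of the k intervals [qt, (q+1)t], q < k, so it
  is constant on one of them, and there the word contains
  ad(s)^(k-1) ad(a_i) ad(s)^(k-1) ... ad(a_(i+t-2)) ad(s)^(k-1).\<close>

lemma fold_comp_eq_comp:
  "fold (\<lambda>u acc. u \<circ> acc) us (g :: 'a \<Rightarrow> 'a) = fold (\<lambda>u acc. u \<circ> acc) us id \<circ> g"
proof (induction us arbitrary: g)
  case (Cons u us)
  show ?case using Cons.IH[of "u \<circ> g"] Cons.IH[of u] by (simp add: comp_assoc)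
qed simp

lemma opprod_Nil [simp]: "opprod [] = id"
  by (simp add: opprod_def)

lemma opprod_Cons [simp]: "opprod (u # us) = opprod us \<circ> u"
  unfolding opprod_def using fold_comp_eq_comp[of us u] by simp

lemma opprod_append [simp]: "opprod (xs @ ys) = opprod ys \<circ> opprod xs"
  by (induction xs) (simp_all add: comp_assoc)

lemma opprod_replicate: "opprod (replicate n f) = f ^^ n"
  by (induction n) (simp_all add: funpow_Suc_right del: funpow.simps)

lemma lin_comb_of_mono: "lin_comb_of scale S T \<Longrightarrow> S \<subseteq> S' \<Longrightarrow> lin_comb_of scale S' T"
  unfolding lin_comb_of_def by blast

context vector_space
begin

lemma lin_comb_of_sum:
  assumes fin: "finite J" and sub: "h ` J \<subseteq> S"
  shows "lin_comb_of scale S (\<lambda>x. \<Sum>j\<in>J. scale (c j) (h j x))"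
proof -
  define c' where "c' f = (\<Sum>j\<in>{j \<in> J. h j = f}. c j)" for f
  have "(\<Sum>j\<in>J. scale (c j) (h j x)) = (\<Sum>f\<in>h ` J. scale (c' f) (f x))" for x
  proof -
    have "(\<Sum>j\<in>J. scale (c j) (h j x)) = (\<Sum>f\<in>h ` J. \<Sum>j\<in>{j \<in> J. h j = f}. scale (c j) (h j x))"
      by (rule sum.image_gen[OF fin])
    also have "\<dots> = (\<Sum>f\<in>h ` J. scale (c' f) (f x))"
      unfolding c'_def scale_sum_left by (intro sum.cong refl) auto
    finally show ?thesis .
  qed
  then show ?thesis
    unfolding lin_comb_of_def using fin sub by (intro exI[of _ "h ` J"] exI[of _ c']) auto
qed

lemma lin_comb_of_single: "f \<in> S \<Longrightarrow> lin_comb_of scale S f"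
  unfolding lin_comb_of_def by (intro exI[of _ "{f}"] exI[of _ "\<lambda>_. 1"]) auto

lemma lin_comb_of_add:
  assumes "lin_comb_of scale S T" "lin_comb_of scale S U"
  shows "lin_comb_of scale S (\<lambda>x. T x + U x)"
proof -
  obtain F c where F: "finite F" "F \<subseteq> S" "T = (\<lambda>x. \<Sum>f\<in>F. scale (c f) (f x))"
    using assms(1) unfolding lin_comb_of_def by blast
  obtain G d where G: "finite G" "G \<subseteq> S" "U = (\<lambda>x. \<Sum>f\<in>G. scale (d f) (f x))"
    using assms(2) unfolding lin_comb_of_def by blast
  have "lin_comb_of scale S (\<lambda>x. \<Sum>j\<in>F <+> G. scale (case_sum c d j) (case_sum id id j x))"
    by (rule lin_comb_of_sum) (use F G in auto)
  then show ?thesis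
    using F G by (simp add: sum.Plus o_def)
qed

lemma lin_comb_of_scale:
  assumes "lin_comb_of scale S T"
  shows "lin_comb_of scale S (\<lambda>x. scale r (T x))"
proof -
  obtain F c where F: "finite F" "F \<subseteq> S" "T = (\<lambda>x. \<Sum>f\<in>F. scale (c f) (f x))"
    using assms unfolding lin_comb_of_def by blast
  show ?thesis
    unfolding lin_comb_of_def using F
    by (intro exI[of _ F] exI[of _ "\<lambda>f. r * c f"]) (auto simp: scale_sum_right)
qed

lemma lin_comb_of_diff:
  assumes "lin_comb_of scale S T" "lin_comb_of scale S U"
  shows "lin_comb_of scale S (\<lambda>x. T x - U x)"
  using lin_comb_of_add[OF assms(1) lin_comb_of_scale[OF assms(2), of "- 1"]] by simp

lemma lin_comb_of_drop_zero:
  assumes "lin_comb_of scale S T" "S \<subseteq> insert (\<lambda>x. 0) S'"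
  shows "lin_comb_of scale S' T"
proof -
  obtain F c where F: "finite F" "F \<subseteq> S" "T = (\<lambda>x. \<Sum>f\<in>F. scale (c f) (f x))"
    using assms(1) unfolding lin_comb_of_def by blast
  have "(\<Sum>f\<in>F. scale (c f) (f x)) = (\<Sum>f\<in>F \<inter> S'. scale (c f) (f x))" for x
    by (rule sum.mono_neutral_right) (use F assms(2) in auto)
  then show ?thesis
    unfolding lin_comb_of_def using F by (intro exI[of _ "F \<inter> S'"] exI[of _ c]) auto
qed

lemma lin_comb_of_comp:
  assumes "lin_comb_of scale S T" "lin_comb_of scale S' U" "Vector_Spaces.linear scale scale U"
  shows "lin_comb_of scale {g \<circ> f |f g. f \<in> S \<and> g \<in> S'} (U \<circ> T)"
proof -
  interpret U: linear scale scale U by fact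
  obtain F c where F: "finite F" "F \<subseteq> S" "T = (\<lambda>x. \<Sum>f\<in>F. scale (c f) (f x))"
    using assms(1) unfolding lin_comb_of_def by blast
  obtain G d where G: "finite G" "G \<subseteq> S'" "U = (\<lambda>x. \<Sum>g\<in>G. scale (d g) (g x))"
    using assms(2) unfolding lin_comb_of_def by blast
  have expand: "U \<circ> T = (\<lambda>x. \<Sum>p\<in>F \<times> G. scale (c (fst p) * d (snd p)) ((snd p \<circ> fst p) x))"
  proof
    fix x
    have "(U \<circ> T) x = (\<Sum>f\<in>F. scale (c f) (U (f x)))"
      by (simp add: F(3) U.sum U.scale)
    also have "\<dots> = (\<Sum>f\<in>F. \<Sum>g\<in>G. scale (c f * d g) (g (f x)))"
      by (simp add: G(3) scale_sum_right)
    also have "\<dots> = (\<Sum>p\<in>F \<times> G. scale (c (fst p) * d (snd p)) ((snd p \<circ> fst p) x))"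
      by (simp add: sum.cartesian_product case_prod_beta)
    finally show "(U \<circ> T) x = \<dots>" .
  qed
  show ?thesis
    unfolding expand by (rule lin_comb_of_sum[where h = "\<lambda>p. snd p \<circ> fst p"]) (use F G in \<open>auto 0 3\<close>)
qed

end

lemma lie_algebra_vector_space: "lie_algebra scale br \<Longrightarrow> vector_space scale"
  unfolding lie_algebra_def by blast

lemma linear_ad: "lie_algebra scale br \<Longrightarrow> Vector_Spaces.linear scale scale (ad br z)"
  unfolding lie_algebra_def linear_iff ad_def by blast

lemma lie_bracket_zero_left:
  assumes "lie_algebra scale br"
  shows "br 0 z = 0"
proof -
  interpret linear scale scale "ad br z" by (rule linear_ad[OF assms])
  show ?thesis using zero by (simp add: ad_def)
qed

lemma lie_bracket_minus_left:
  assumes "lie_algebra scale br"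
  shows "br (- x) z = - br x z"
proof -
  interpret linear scale scale "ad br z" by (rule linear_ad[OF assms])
  show ?thesis using neg[of x] by (simp add: ad_def)
qed

lemma lie_bracket_anticomm:
  assumes "lie_algebra scale br"
  shows "br x y = - br y x"
proof -
  have add_left: "br (u + v) w = br u w + br v w"
    and add_right: "br w (u + v) = br w u + br w v"
    and alternating: "br u u = 0" for u v w
    using assms unfolding lie_algebra_def by blast+
  have "br x y + br y x = br (x + y) (x + y)"
    by (simp only: add_left add_right) (simp add: alternating)
  also have "\<dots> = 0"
    by (rule alternating)
  finally show ?thesis
    by (simp only: eq_neg_iff_add_eq_0)
qed

lemma ad_bracket:
  assumes "lie_algebra scale br"
  shows "ad br (br x y) = (\<lambda>z. ad br y (ad br x z) - ad br x (ad br y z))"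
proof
  fix z
  have "br (br x y) z + br (br y z) x + br (br z x) y = 0"
    using assms unfolding lie_algebra_def by blast
  moreover have "br (br y z) x = - br (br z y) x"
    using lie_bracket_anticomm[OF assms, of y z] lie_bracket_minus_left[OF assms] by simp
  moreover have "br z (br x y) = - br (br x y) z"
    by (rule lie_bracket_anticomm[OF assms])
  ultimately have "br z (br x y) = br (br z x) y - br (br z y) x"
    by (simp add: algebra_simps)
  then show "ad br (br x y) z = ad br y (ad br x z) - ad br x (ad br y z)"
    by (simp add: ad_def)
qed

lemma ad_lcomm_pow_lin_comb:
  assumes L: "lie_algebra scale br"
  shows "lin_comb_of scale {opprod (replicate m (ad br s) @ ad br z # replicate (n - m) (ad br s)) | m. m \<le> n}
    (ad br (lcomm_pow br z s n))"
proof (induction n)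
  case 0
  have "ad br z \<in> {opprod (replicate m (ad br s) @ ad br z # replicate (0 - m) (ad br s)) | m. m \<le> 0}"
    by force
  then show ?case
    using vector_space.lin_comb_of_single[OF lie_algebra_vector_space[OF L]] by (simp add: lcomm_pow_def)
next
  case (Suc n)
  interpret vector_space scale by (rule lie_algebra_vector_space[OF L])
  let ?S = "ad br s"
  let ?W = "\<lambda>n. {opprod (replicate m ?S @ ad br z # replicate (n - m) ?S) | m. m \<le> n}"
  define X where "X = lcomm_pow br z s n"
  have bracket: "ad br (lcomm_pow br z s (Suc n)) = (\<lambda>y. (?S \<circ> ad br X) y - (ad br X \<circ> ?S) y)"
    using ad_bracket[OF L, of X s] by (simp add: lcomm_pow_def X_def ad_def)
  have left: "lin_comb_of scale {g \<circ> f |f g. f \<in> ?W n \<and> g \<in> {?S}} (?S \<circ> ad br X)"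
    by (rule lin_comb_of_comp[OF Suc.IH[folded X_def] lin_comb_of_single linear_ad[OF L]]) simp
  have left_words: "{g \<circ> f |f g. f \<in> ?W n \<and> g \<in> {?S}} \<subseteq> ?W (Suc n)"
  proof clarify
    fix m assume "m \<le> n"
    then have "?S \<circ> opprod (replicate m ?S @ ad br z # replicate (n - m) ?S)
        = opprod (replicate m ?S @ ad br z # replicate (Suc n - m) ?S)"
      by (simp add: Suc_diff_le comp_assoc replicate_append_same[symmetric] del: replicate_append_same)
    with \<open>m \<le> n\<close> show "\<exists>m'. ?S \<circ> opprod (replicate m ?S @ ad br z # replicate (n - m) ?S)
        = opprod (replicate m' ?S @ ad br z # replicate (Suc n - m') ?S) \<and> m' \<le> Suc n"
      by auto
  qed
  have right: "lin_comb_of scale {g \<circ> f |f g. f \<in> {?S} \<and> g \<in> ?W n} (ad br X \<circ> ?S)"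
    by (rule lin_comb_of_comp[OF lin_comb_of_single Suc.IH[folded X_def] linear_ad[OF L]]) simp
  have right_words: "{g \<circ> f |f g. f \<in> {?S} \<and> g \<in> ?W n} \<subseteq> ?W (Suc n)"
  proof clarify
    fix m assume "m \<le> n"
    then show "\<exists>m'. opprod (replicate m ?S @ ad br z # replicate (n - m) ?S) \<circ> ?S
        = opprod (replicate m' ?S @ ad br z # replicate (Suc n - m') ?S) \<and> m' \<le> Suc n"
      by (intro exI[of _ "Suc m"]) (simp add: comp_assoc)
  qed
  show ?case
    unfolding bracket
    by (rule lin_comb_of_diff[OF lin_comb_of_mono[OF left left_words] lin_comb_of_mono[OF right right_words]])
qed

text \<open>The summand ad(s)^(m l) ad(a_l) ad(s)^(k-1-m l) in the expansion of ad([a_l s^(k-1)]); a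
  function m with values at most k-1 picks one summand for each factor of the product.\<close>
definition ad_block ::
    "('a \<Rightarrow> 'a \<Rightarrow> 'a) \<Rightarrow> 'a \<Rightarrow> (nat \<Rightarrow> 'a) \<Rightarrow> nat \<Rightarrow> (nat \<Rightarrow> nat) \<Rightarrow> nat \<Rightarrow> ('a \<Rightarrow> 'a) list"
  where
  "ad_block br s a k m l = replicate (m l) (ad br s) @ ad br (a l) # replicate (k - 1 - m l) (ad br s)"

lemma opprod_ad_blocks_Suc:
  "opprod (replicate \<mu> (ad br s) @ ad br (a (Suc n)) # replicate (k - 1 - \<mu>) (ad br s))
     \<circ> opprod (concat (map (ad_block br s a k m) [1..<Suc n]))
   = opprod (concat (map (ad_block br s a k (m(Suc n := \<mu>))) [1..<Suc (Suc n)]))"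
proof -
  have "map (ad_block br s a k (m(Suc n := \<mu>))) [1..<Suc n] = map (ad_block br s a k m) [1..<Suc n]"
    by (rule map_cong) (auto simp: ad_block_def)
  then have "concat (map (ad_block br s a k (m(Suc n := \<mu>))) [1..<Suc (Suc n)])
      = concat (map (ad_block br s a k m) [1..<Suc n])
        @ (replicate \<mu> (ad br s) @ ad br (a (Suc n)) # replicate (k - 1 - \<mu>) (ad br s))"
    by (simp only: upt_Suc_append[of 1 "Suc n"] map_append concat_append) (simp add: ad_block_def)
  then show ?thesis
    by (simp only: opprod_append)
qed

lemma opprod_ad_lcomm_pow_lin_comb:
  assumes L: "lie_algebra scale br"
  shows "lin_comb_of scale {opprod (concat (map (ad_block br s a k m) [1..<Suc n])) | m. \<forall>l. m l \<le> k - 1}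
    (opprod (map (\<lambda>l. ad br (lcomm_pow br (a l) s (k - 1))) [1..<Suc n]))"
proof (induction n)
  case 0
  have "id \<in> {opprod (concat (map (ad_block br s a k m) [1..<Suc 0])) | m. \<forall>l. m l \<le> k - 1}"
    by (simp add: exI[of _ "\<lambda>_. 0"])
  then show ?case
    using vector_space.lin_comb_of_single[OF lie_algebra_vector_space[OF L]] by simp
next
  case (Suc n)
  interpret vector_space scale by (rule lie_algebra_vector_space[OF L])
  let ?S = "ad br s"
  let ?W = "\<lambda>n. {opprod (concat (map (ad_block br s a k m) [1..<Suc n])) | m. \<forall>l. m l \<le> k - 1}"
  let ?B = "{opprod (replicate \<mu> ?S @ ad br (a (Suc n)) # replicate (k - 1 - \<mu>) ?S) | \<mu>. \<mu> \<le> k - 1}"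
  let ?D = "\<lambda>l. ad br (lcomm_pow br (a l) s (k - 1))"
  have split: "opprod (map ?D [1..<Suc (Suc n)]) = ?D (Suc n) \<circ> opprod (map ?D [1..<Suc n])"
    by simp
  have expand: "lin_comb_of scale {g \<circ> f |f g. f \<in> ?W n \<and> g \<in> ?B}
      (?D (Suc n) \<circ> opprod (map ?D [1..<Suc n]))"
    by (rule lin_comb_of_comp[OF Suc.IH ad_lcomm_pow_lin_comb[OF L] linear_ad[OF L]])
  have words: "{g \<circ> f |f g. f \<in> ?W n \<and> g \<in> ?B} \<subseteq> ?W (Suc n)"
  proof clarify
    fix m :: "nat \<Rightarrow> nat" and \<mu> :: nat
    assume "\<forall>l. m l \<le> k - 1" "\<mu> \<le> k - 1"
    then have "\<forall>l. (m(Suc n := \<mu>)) l \<le> k - 1"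
      by simp
    with opprod_ad_blocks_Suc[of \<mu> br s a n k m]
    show "\<exists>m'. opprod (replicate \<mu> ?S @ ad br (a (Suc n)) # replicate (k - 1 - \<mu>) ?S)
        \<circ> opprod (concat (map (ad_block br s a k m) [1..<Suc n]))
        = opprod (concat (map (ad_block br s a k m') [1..<Suc (Suc n)])) \<and> (\<forall>l. m' l \<le> k - 1)"
      by blast
  qed
  show ?case
    unfolding split by (rule lin_comb_of_mono[OF expand words])
qed

lemma opprod_ad_zero:
  assumes "lie_algebra scale br" "set us \<subseteq> range (ad br)"
  shows "opprod us 0 = 0"
  using assms(2) by (induction us) (auto simp: ad_def lie_bracket_zero_left[OF assms(1)])

lemma opprod_ad_ideal_nil_zero:
  assumes L: "lie_algebra scale br" and Id: "lie_ideal scale br I"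
    and nil: "\<forall>x\<in>I. lcomm_pow br x s k = 0" and b: "b \<in> I" and e: "k \<le> e"
    and ys: "set ys \<subseteq> range (ad br)"
  shows "opprod (xs @ ad br b # replicate e (ad br s) @ ys) = (\<lambda>x. 0)"
proof
  fix x
  define y where "y = br (opprod xs x) b"
  have "y \<in> I"
    using Id b unfolding lie_ideal_def y_def by blast
  have s_powers_zero: "(ad br s ^^ n) 0 = 0" for n
    by (induction n) (simp_all add: ad_def lie_bracket_zero_left[OF L])
  have "(ad br s ^^ e) y = (ad br s ^^ (e - k)) ((ad br s ^^ k) y)"
    using e by (metis funpow_add le_add_diff_inverse2 o_apply)
  also have "\<dots> = 0"
    using nil \<open>y \<in> I\<close> s_powers_zero by (simp add: lcomm_pow_def)
  finally show "opprod (xs @ ad br b # replicate e (ad br s) @ ys) x = 0"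
    using opprod_ad_zero[OF L ys] by (simp add: opprod_replicate ad_def y_def)
qed

lemma upt_split: "i \<le> j \<Longrightarrow> j \<le> k \<Longrightarrow> [i..<k] = [i..<j] @ [j..<k]"
  by (metis le_add_diff_inverse upt_add_eq_append)

lemma ad_blocks_zero_if_ascent:
  assumes L: "lie_algebra scale br" and Id: "lie_ideal scale br I"
    and nil: "\<forall>x\<in>I. lcomm_pow br x s k = 0" and aI: "\<forall>j\<in>{1..N}. a j \<in> I"
    and bound: "m l \<le> k - 1" and l: "1 \<le> l" "l < N" and ascent: "m l < m (Suc l)"
  shows "opprod (concat (map (ad_block br s a k m) [1..<Suc N])) = (\<lambda>x. 0)"
proof -
  let ?S = "ad br s"
  have "[1..<Suc N] = [1..<l] @ [l..<Suc N]"
    by (rule upt_split) (use l in auto)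
  also have "[l..<Suc N] = l # Suc l # [Suc (Suc l)..<Suc N]"
    using l by (metis Suc_less_eq less_SucI upt_conv_Cons)
  finally have "[1..<Suc N] = [1..<l] @ l # Suc l # [Suc (Suc l)..<Suc N]" .
  then have "concat (map (ad_block br s a k m) [1..<Suc N])
      = (concat (map (ad_block br s a k m) [1..<l]) @ replicate (m l) ?S)
        @ ad br (a l) # replicate (k - 1 - m l + m (Suc l)) ?S
        @ ad br (a (Suc l)) # replicate (k - 1 - m (Suc l)) ?S
        @ concat (map (ad_block br s a k m) [Suc (Suc l)..<Suc N])"
    by (simp add: ad_block_def replicate_add)
  moreover have "opprod \<dots> = (\<lambda>x. 0)"
  proof (rule opprod_ad_ideal_nil_zero[OF L Id nil])
    show "a l \<in> I"
      using aI l by simp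
    show "k \<le> k - 1 - m l + m (Suc l)"
      using bound ascent by linarith
  qed (auto simp: ad_block_def)
  ultimately show ?thesis
    by simp
qed

lemma ad_blocks_const_shift:
  assumes "\<forall>l\<in>set L. m l = \<mu>" "\<mu> \<le> k - 1"
  shows "replicate \<mu> (ad br s) @ concat (map (\<lambda>l. ad br (a l) # replicate (k - 1) (ad br s)) L)
    = concat (map (ad_block br s a k m) L) @ replicate \<mu> (ad br s)"
  using assms(1)
proof (induction L)
  case (Cons l L)
  have "replicate (k - 1) (ad br s) = replicate (k - 1 - \<mu>) (ad br s) @ replicate \<mu> (ad br s)"
    using assms(2) by (simp add: replicate_add[symmetric])
  with Cons show ?case
    by (simp add: ad_block_def)
qed simp

lemma antimono_exists_flat_interval:
  fixes f :: "nat \<Rightarrow> nat"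
  assumes dec: "\<And>i. f (Suc i) \<le> f i" and "f 0 < k"
  shows "\<exists>q<k. \<forall>l\<in>{q * t..q * t + t}. f l = f (q * t)"
proof -
  have le: "f j \<le> f i" if "i \<le> j" for i j
    using lift_Suc_antimono_le[of f, OF dec that] .
  have "\<exists>q<k. f (q * t) = f (Suc q * t)"
  proof (rule ccontr)
    assume none: "\<not> ?thesis"
    have drop: "f (Suc q * t) < f (q * t)" if "q < k" for q
      using le[of "q * t" "Suc q * t"] none that by fastforce
    have "f (q * t) + q \<le> f 0" if "q \<le> k" for q
      using that
    proof (induction q)
      case (Suc q)
      then show ?case
        using drop[of q] by simp
    qed simp
    from this[of k] \<open>f 0 < k\<close> show False
      by simp
  qed
  then obtain q where "q < k" "f (q * t) = f (Suc q * t)"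
    by blast
  then have "\<forall>l\<in>{q * t..q * t + t}. f l = f (q * t)"
    using le by (metis add.commute antisym atLeastAtMost_iff mult_Suc)
  with \<open>q < k\<close> show ?thesis
    by blast
qed

lemma set_concat_ad_blocks:
  "set L \<subseteq> {1..N} \<Longrightarrow>
    set (concat (map (ad_block br s a k m) L)) \<subseteq> insert (ad br s) ((\<lambda>l. ad br (a l)) ` {1..N})"
  by (auto simp: ad_block_def)

lemma ad_blocks_prefix:
  assumes "m 0 = k - 1" "m j = \<mu>" "\<mu> \<le> k - 1" "j \<le> N"
  shows "\<exists>P. set P \<subseteq> insert (ad br s) ((\<lambda>l. ad br (a l)) ` {1..N})
    \<and> concat (map (ad_block br s a k m) [1..<Suc j]) @ replicate \<mu> (ad br s) = P @ replicate (k - 1) (ad br s)"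
proof (cases j)
  case 0
  then show ?thesis
    using assms(1,2) by simp
next
  case (Suc i)
  let ?B = "ad_block br s a k m"
  have "?B j @ replicate \<mu> (ad br s) = replicate \<mu> (ad br s) @ ad br (a j) # replicate (k - 1) (ad br s)"
    using assms(2,3) by (simp add: ad_block_def replicate_add[symmetric])
  moreover have "concat (map ?B [1..<Suc j]) = concat (map ?B [1..<j]) @ ?B j"
    using Suc by (simp del: upt_Suc add: upt_Suc_append)
  moreover have "set (concat (map ?B [1..<j])) \<subseteq> insert (ad br s) ((\<lambda>l. ad br (a l)) ` {1..N})"
    by (rule set_concat_ad_blocks) (use assms(4) in auto)
  ultimately show ?thesis
    using Suc assms(4) by (intro exI[of _ "concat (map ?B [1..<j]) @ replicate \<mu> (ad br s) @ [ad br (a j)]"]) auto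
qed

lemma ad_blocks_suffix:
  assumes "m (Suc N) = 0" "m l = \<mu>" "1 \<le> l" "l \<le> Suc N"
  shows "\<exists>P. set P \<subseteq> insert (ad br s) ((\<lambda>l. ad br (a l)) ` {1..N})
    \<and> concat (map (ad_block br s a k m) [l..<Suc N]) = replicate \<mu> (ad br s) @ P"
proof (cases "l = Suc N")
  case True
  then show ?thesis
    using assms(1,2) by simp
next
  case False
  let ?B = "ad_block br s a k m"
  have "[l..<Suc N] = l # [Suc l..<Suc N]"
    using False assms(4) by (simp add: upt_conv_Cons del: upt_Suc)
  then have "concat (map ?B [l..<Suc N])
      = replicate \<mu> (ad br s) @ ad br (a l) # replicate (k - 1 - \<mu>) (ad br s) @ concat (map ?B [Suc l..<Suc N])"
    using assms(2) by (simp add: ad_block_def del: upt_Suc)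
  moreover have "set (concat (map ?B [Suc l..<Suc N])) \<subseteq> insert (ad br s) ((\<lambda>l. ad br (a l)) ` {1..N})"
    by (rule set_concat_ad_blocks) auto
  ultimately show ?thesis
    using False assms(3,4)
    by (intro exI[of _ "ad br (a l) # replicate (k - 1 - \<mu>) (ad br s) @ concat (map ?B [Suc l..<Suc N])"]) auto
qed

lemma ad_blocks_window:
  fixes m :: "nat \<Rightarrow> nat"
  assumes bound: "\<forall>l. m l \<le> k - 1" and m0: "m 0 = k - 1" and mN: "m (Suc N) = 0"
    and t: "1 \<le> t" and jt: "j + t \<le> Suc N" and flat: "\<forall>l\<in>{j..j + t}. m l = \<mu>"
  shows "\<exists>P1 P2. set P1 \<subseteq> insert (ad br s) ((\<lambda>l. ad br (a l)) ` {1..N})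
    \<and> set P2 \<subseteq> insert (ad br s) ((\<lambda>l. ad br (a l)) ` {1..N})
    \<and> concat (map (ad_block br s a k m) [1..<Suc N])
      = P1 @ replicate (k - 1) (ad br s)
        @ concat (map (\<lambda>i. ad br (a (Suc j + i)) # replicate (k - 1) (ad br s)) [0..<t - 1]) @ P2"
proof -
  let ?S = "ad br s"
  let ?B = "ad_block br s a k m"
  let ?C = "\<lambda>l. ad br (a l) # replicate (k - 1) ?S"
  have \<mu>: "\<mu> \<le> k - 1"
    using bound flat by force
  obtain P1 where P1: "set P1 \<subseteq> insert ?S ((\<lambda>l. ad br (a l)) ` {1..N})"
      "concat (map ?B [1..<Suc j]) @ replicate \<mu> ?S = P1 @ replicate (k - 1) ?S"
    using ad_blocks_prefix[where m = m and j = j and N = N and br = br and s = s and a = a, OF m0 _ \<mu>]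
      flat jt t by auto
  obtain P2 where P2: "set P2 \<subseteq> insert ?S ((\<lambda>l. ad br (a l)) ` {1..N})"
      "concat (map ?B [j + t..<Suc N]) = replicate \<mu> ?S @ P2"
    using ad_blocks_suffix[where m = m and N = N and k = k and l = "j + t" and \<mu> = \<mu> and br = br and s = s and a = a,
      OF mN _ _ jt]
      flat t by auto
  have middle: "replicate \<mu> ?S @ concat (map ?C [Suc j..<j + t]) = concat (map ?B [Suc j..<j + t]) @ replicate \<mu> ?S"
    by (rule ad_blocks_const_shift) (use flat \<mu> in auto)
  have "map (\<lambda>i. ?C (Suc j + i)) [0..<t - 1] = map ?C (map (\<lambda>i. i + Suc j) [0..<t - 1])"
    by (simp add: add.commute)
  also have "\<dots> = map ?C [Suc j..<j + t]"
    using t by (simp only: map_add_upt) (simp add: add.commute)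
  finally have reindex: "map (\<lambda>i. ?C (Suc j + i)) [0..<t - 1] = map ?C [Suc j..<j + t]" .
  have "[1..<Suc N] = [1..<Suc j] @ [Suc j..<Suc N]"
    by (rule upt_split) (use jt t in auto)
  also have "[Suc j..<Suc N] = [Suc j..<j + t] @ [j + t..<Suc N]"
    by (rule upt_split) (use jt t in auto)
  finally have "concat (map ?B [1..<Suc N])
      = (concat (map ?B [1..<Suc j]) @ replicate \<mu> ?S) @ concat (map ?C [Suc j..<j + t]) @ P2"
    using P2(2) middle by simp
  then show ?thesis
    using P1 P2(1) reindex by (metis append.assoc)
qed

lemma ad_blocks_pattern_if_antimono:
  fixes m :: "nat \<Rightarrow> nat" and k t :: nat
  assumes k: "1 \<le> k" and t: "1 \<le> t" and bound: "\<forall>l. m l \<le> k - 1"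
    and mono: "\<forall>l. 1 \<le> l \<and> Suc l < k * t \<longrightarrow> m (Suc l) \<le> m l"
  shows "opprod (concat (map (ad_block br s a k m) [1..<k * t])) \<in>
     { opprod (P1 @ replicate (k - 1) (ad br s)
               @ concat (map (\<lambda>j. ad br (a (i + j)) # replicate (k - 1) (ad br s)) [0..<t - 1])
               @ P2)
       | i P1 P2. 1 \<le> i \<and> i + t - 2 \<le> k * t - 1
           \<and> set P1 \<subseteq> insert (ad br s) ((\<lambda>j. ad br (a j)) ` {1..k * t - 1})
           \<and> set P2 \<subseteq> insert (ad br s) ((\<lambda>j. ad br (a j)) ` {1..k * t - 1}) }"
proof -
  define N where "N = k * t - 1"
  have kt: "k * t = Suc N"
    using k t by (simp add: N_def)
  define m' where "m' l = (if l = 0 then k - 1 else if l \<le> N then m l else 0)" for l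
  have dec: "m' (Suc l) \<le> m' l" for l
    unfolding m'_def using bound mono kt by auto
  obtain q where q: "q < k" and flat: "\<forall>l\<in>{q * t..q * t + t}. m' l = m' (q * t)"
    using antimono_exists_flat_interval[of m' k t] dec k by (auto simp: m'_def)
  have window: "q * t + t \<le> Suc N"
    using q(1) kt mult_le_mono1[of "Suc q" k t] by simp
  have m': "\<forall>l. m' l \<le> k - 1" "m' 0 = k - 1" "m' (Suc N) = 0"
    using bound by (simp_all add: m'_def)
  obtain P1 P2 where
    P: "set P1 \<subseteq> insert (ad br s) ((\<lambda>l. ad br (a l)) ` {1..N})"
       "set P2 \<subseteq> insert (ad br s) ((\<lambda>l. ad br (a l)) ` {1..N})"
       "concat (map (ad_block br s a k m') [1..<Suc N])
        = P1 @ replicate (k - 1) (ad br s)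
          @ concat (map (\<lambda>i. ad br (a (Suc (q * t) + i)) # replicate (k - 1) (ad br s)) [0..<t - 1]) @ P2"
    using ad_blocks_window[OF m' t window flat, where br = br and s = s and a = a] by blast
  have "concat (map (ad_block br s a k m) [1..<k * t]) = concat (map (ad_block br s a k m') [1..<Suc N])"
    unfolding kt by (rule arg_cong[where f = concat], rule map_cong) (auto simp: ad_block_def m'_def)
  also note P(3)
  finally have word: "concat (map (ad_block br s a k m) [1..<k * t])
      = P1 @ replicate (k - 1) (ad br s)
        @ concat (map (\<lambda>i. ad br (a (Suc (q * t) + i)) # replicate (k - 1) (ad br s)) [0..<t - 1]) @ P2" .
  have "1 \<le> Suc (q * t) \<and> Suc (q * t) + t - 2 \<le> N"
    using window by simp
  then show ?thesis
    unfolding word N_def[symmetric] using P(1,2) by blast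
qed

lemma ad_blocks_zero_or_pattern:
  assumes L: "lie_algebra scale br" and Id: "lie_ideal scale br I"
    and nil: "\<forall>x\<in>I. lcomm_pow br x s k = 0" and aI: "\<forall>j\<in>{1..k * t - 1}. a j \<in> I"
    and k: "1 \<le> k" and t: "1 \<le> t" and bound: "\<forall>l. m l \<le> k - 1"
  shows "opprod (concat (map (ad_block br s a k m) [1..<k * t])) \<in> insert (\<lambda>x. 0)
     { opprod (P1 @ replicate (k - 1) (ad br s)
               @ concat (map (\<lambda>j. ad br (a (i + j)) # replicate (k - 1) (ad br s)) [0..<t - 1])
               @ P2)
       | i P1 P2. 1 \<le> i \<and> i + t - 2 \<le> k * t - 1
           \<and> set P1 \<subseteq> insert (ad br s) ((\<lambda>j. ad br (a j)) ` {1..k * t - 1})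
           \<and> set P2 \<subseteq> insert (ad br s) ((\<lambda>j. ad br (a j)) ` {1..k * t - 1}) }"
proof (cases "\<exists>l. 1 \<le> l \<and> Suc l < k * t \<and> m l < m (Suc l)")
  case True
  then obtain l where l: "1 \<le> l" "l < k * t - 1" "m l < m (Suc l)"
    by auto
  have "Suc (k * t - 1) = k * t"
    using k t by simp
  then show ?thesis
    using ad_blocks_zero_if_ascent[OF L Id nil aI _ l] bound by simp
next
  case False
  then have "\<forall>l. 1 \<le> l \<and> Suc l < k * t \<longrightarrow> m (Suc l) \<le> m l"
    using not_less by blast
  then show ?thesis
    by (rule insertI2[OF ad_blocks_pattern_if_antimono[OF k t bound]])
qed

theorem lemma7:
  fixes scale :: "'k::field \<Rightarrow> 'a::ab_group_add \<Rightarrow> 'a"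
    and br :: "'a \<Rightarrow> 'a \<Rightarrow> 'a"
    and I :: "'a set" and s :: 'a and k t :: nat and a :: "nat \<Rightarrow> 'a"
  assumes "lie_algebra scale br"
    and "lie_ideal scale br I"
    and "k \<ge> 2"
    and "\<forall>x\<in>I. lcomm_pow br x s k = 0"
    and "t \<ge> 2"
    and "\<forall>j\<in>{1..k*t-1}. a j \<in> I"
  shows "lin_comb_of scale
     { opprod (P1 @ replicate (k-1) (ad br s)
               @ concat (map (\<lambda>j. ad br (a (i+j)) # replicate (k-1) (ad br s)) [0..<t-1])
               @ P2)
       | i P1 P2. 1 \<le> i \<and> i + t - 2 \<le> k*t-1
           \<and> set P1 \<subseteq> insert (ad br s) ((\<lambda>j. ad br (a j)) ` {1..k*t-1})
           \<and> set P2 \<subseteq> insert (ad br s) ((\<lambda>j. ad br (a j)) ` {1..k*t-1}) }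
     (opprod (map (\<lambda>j. ad br (lcomm_pow br (a j) s (k-1))) [1..<k*t]))"
proof -
  have k: "1 \<le> k" and t: "1 \<le> t"
    using assms(3,5) by simp_all
  then have "Suc (k * t - 1) = k * t"
    by simp
  then have "lin_comb_of scale {opprod (concat (map (ad_block br s a k m) [1..<k * t])) | m. \<forall>l. m l \<le> k - 1}
      (opprod (map (\<lambda>j. ad br (lcomm_pow br (a j) s (k - 1))) [1..<k * t]))"
    using opprod_ad_lcomm_pow_lin_comb[OF assms(1), of s a k "k * t - 1"] by simp
  then show ?thesis
    by (rule vector_space.lin_comb_of_drop_zero[OF lie_algebra_vector_space[OF assms(1)]])
      (use ad_blocks_zero_or_pattern[OF assms(1,2,4,6) k t] in blast)
qed

end
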